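(* Consider the faulty system, the neural-network-based observer with mirror-descent last-layer adaptation, and the Lyapunov function $V$ described in the context. Suppose Assumptions A1, A2, A3 of the context hold, and that $\sigma_\mathrm{a},\sigma_\mathrm{s}>0$ are chosen such that, along the trajectories of the system and observer, $\dot V\le -\alpha_V V+\sigma$ for some constants $\alpha_V>0$ and $\sigma>0$. Then the state estimation error $e(t)=x(t)-\hat x(t)$ and the weight errors $\tilde W_\mathrm{a}(t)=W_\mathrm{a}^*-W_\mathrm{a}(t)$, $\tilde W_\mathrm{s}(t)=W_\mathrm{s}^*-W_\mathrm{s}(t)$ are uniformly ultimately bounded. Moreover, $e(t)$ converges exponentially to a residual set of size determined by $\sigma/\alpha_V$.
   Context: System: $\dot x=f(x)+g(x)u+\sum_{i} g_i^{\mathrm f}(x)f_{\mathrm{a},i}(t)+d(t)$, $y=h(x)+\sum_j e_jf_{\mathrm{s},j}(t)$, with $x\in\mathbb{R}^n$, $u\in\mathbb{R}^m$, $y\in\mathbb{R}^p$, $g(x)=[g_1(x)\cdots g_m(x)]$, smooth maps, and bounded disturbance $\|d(t)\|<\bar d$. Write $f_\mathrm{a}=[f_{\mathrm{a},1},\dots,f_{\mathrm{a},m}]^\top$ and $f_\mathrm{s}=\sum_je_jf_{\mathrm{s},j}$. Observer: $\dot{\hat x}=f(\hat x)+g(\hat x)u+g(\hat x)\hat f_\mathrm{a}(\hat x,u)+L(y-\hat y)$, $\hat y=h(\hat x)+\hat f_\mathrm{s}(\hat x,u)$, with gain $L$, $\hat f_\mathrm{a}=W_\mathrm{a}^\top\phi_\mathrm{a}(\hat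 x,u)\in\mathbb{R}^m$, $\hat f_\mathrm{s}=W_\mathrm{s}^\top\phi_\mathrm{s}(\hat x,u)\in\mathbb{R}^p$, $W_\mathrm{a}\in\mathbb{R}^{n_\mathrm{a}\times m}$, $W_\mathrm{s}\in\mathbb{R}^{n_\mathrm{s}\times p}$, and smooth feature maps $\phi_\mathrm{a},\phi_\mathrm{s}$ (fixed, pretrained hidden layers). A1: there exist unknown bounded ideal weights $W_\mathrm{a}^*,W_\mathrm{s}^*$ with $f_\mathrm{a}=W_\mathrm{a}^{*\top}\phi_\mathrm{a}(x,u)+\varepsilon_\mathrm{a}(t)$, $f_\mathrm{s}=W_\mathrm{s}^{*\top}\phi_\mathrm{s}(x,u)+\varepsilon_\mathrm{s}(t)$, $\|\varepsilon_\mathrm{a}\|\le\bar\varepsilon_\mathrm{a}$, $\|\varepsilon_\mathrm{s}\|\le\bar\varepsilon_\mathrm{s}$, and $\phi_\mathrm{a},\phi_\mathrm{s}$ are Lipschitz in the state: $\|\phi_\mathrm{a}(x,u)-\phi_\mathrm{a}(\hat x,u)\|\le L^e_{\phi_\mathrm{a}}\|x-\hat x\|$, similarly for $\phi_\mathrm{s}$. A2: with $A_\mathrm{L}(x)=\frac{\partial f}{\partial x}(x)+\sum_k\frac{\partial g_k}{\partial x}(x)u_k-L\frac{\partial h}{\partial x}(x)$, there exist a smooth metric $M(x)=M(x)^\top\succ0$ with $\underline mI\preceq M\preceq\bar mI$ and $\lambda>0$ such that $\dot M+A_\mathrm{L}^\top M+MA_\mathrm{L}\preceq-2\lambda M$.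 A3: $f,g,h$ are locally Lipschitz on a compact set containing $(x(t),\hat x(t),u(t))$ for all $t\ge0$. Mirror maps: $\psi_\mathrm{a},\psi_\mathrm{s}$ are elastic-net maps $\psi(W)=\frac{\beta}{2}\langle W,\Xi W\rangle+\alpha\sum_{j}\sqrt{\|w_{(:,j)}\|_2^2+\varepsilon}$ ($\beta,\alpha,\varepsilon>0$, $\Xi$ positive diagonal, $w_{(:,j)}$ the columns of $W$); their Bregman divergence is $D_\psi(\omega\|\omega^* )=\psi(\omega)-\psi(\omega^* )-\langle\nabla\psi(\omega^* ),\omega-\omega^*\rangle$, and $K_{\mathrm{a},i},K_{\mathrm{s},j}$ denote the diagonal (column) blocks of the Hessians $\nabla^2\psi_\mathrm{a}(W_\mathrm{a})$, $\nabla^2\psi_\mathrm{s}(W_\mathrm{s})$. Let $r=y-\hat y$ and $z=g(\hat x)^\top M(\hat x)Lr$. Adaptive laws (columns $w_{\mathrm{a},i},w_{\mathrm{s},j}$): $\dot w_{\mathrm{a},i}=-\gamma_{\mathrm{a},i}K_{\mathrm{a},i}^{-1}\phi_\mathrm{a}(\hat x,u)z_i-\sigma_\mathrm{a}w_{\mathrm{a},i}$, $\dot w_{\mathrm{s},j}=\gamma_{\mathrm{s},j}K_{\mathrm{s},j}^{-1}\phi_\mathrm{s}(\hat x,u)r_j-\sigma_\mathrm{s}w_{\mathrm{s},j}$, where $\gamma_{\mathrm{a},i},\gamma_{\mathrm{s},j}>0$ are the diagonal entries of the gain matrices $\Gamma_\mathrm{a},\Gamma_\mathrm{s}$ and $\sigma_\mathrm{a},\sigma_\mathrm{s}>0$.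 Lyapunov function: $V=\frac12e^\top M(\hat x)e+\sum_{i=1}^m\frac{1}{\gamma_{\mathrm{a},i}}D_{\psi_\mathrm{a}}(w^*_{\mathrm{a},i}\|w_{\mathrm{a},i})+\sum_{j=1}^p\frac{1}{\gamma_{\mathrm{s},j}}D_{\psi_\mathrm{s}}(w^*_{\mathrm{s},j}\|w_{\mathrm{s},j})$, with $w^*_{\mathrm{a},i},w^*_{\mathrm{s},j}$ the columns of $W_\mathrm{a}^*,W_\mathrm{s}^*$. *)

theory Defs
  imports "HOL-Analysis.Analysis"
begin

definition psd_le :: "real^'n^'n \<Rightarrow> real^'n^'n \<Rightarrow> bool" where
  "psd_le A B \<longleftrightarrow> (\<forall>v. v \<bullet> (A *v v) \<le> v \<bullet> (B *v v))"

definition diagm :: "real^'k \<Rightarrow> real^'k^'k" where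
  "diagm \<xi> = (\<chi> i j. if i = j then \<xi> $ i else 0)"

definition enet_map :: "real \<Rightarrow> real \<Rightarrow> real \<Rightarrow> real^'k \<Rightarrow> real^'c^'k \<Rightarrow> real" where
  "enet_map \<beta> \<alpha> \<epsilon> \<xi> W =
     \<beta> / 2 * (\<Sum>k\<in>UNIV. \<Sum>j\<in>UNIV. W $ k $ j * ((diagm \<xi> ** W) $ k $ j))
     + \<alpha> * (\<Sum>j\<in>UNIV. sqrt ((norm (column j W))\<^sup>2 + \<epsilon>))"

definition enet_col :: "real \<Rightarrow> real \<Rightarrow> real \<Rightarrow> real^'k \<Rightarrow> real^'k \<Rightarrow> real" where
  "enet_col \<beta> \<alpha> \<epsilon> \<xi> w = \<beta> / 2 * (w \<bullet> (diagm \<xi> *v w)) + \<alpha> * sqrt ((norm w)\<^sup>2 + \<epsilon>)"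

definition bregman :: "('a::real_normed_vector \<Rightarrow> real) \<Rightarrow> 'a \<Rightarrow> 'a \<Rightarrow> real" where
  "bregman \<psi> \<omega> \<omega>' = \<psi> \<omega> - \<psi> \<omega>' - frechet_derivative \<psi> (at \<omega>') (\<omega> - \<omega>')"

definition hessian :: "(real^'k \<Rightarrow> real) \<Rightarrow> real^'k \<Rightarrow> real^'k^'k" where
  "hessian \<psi> w = jacobian (\<lambda>v. \<chi> k. frechet_derivative \<psi> (at v) (axis k 1)) (at w)"

definition col_upd :: "real^'c^'k \<Rightarrow> 'c \<Rightarrow> real^'k \<Rightarrow> real^'c^'k" where
  "col_upd W j v = (\<chi> k i. if i = j then v $ k else W $ k $ i)"

definition hess_block :: "(real^'c^'k \<Rightarrow> real) \<Rightarrow> real^'c^'k \<Rightarrow> 'c \<Rightarrow> real^'k^'k" where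
  "hess_block \<psi> W j = hessian (\<lambda>v. \<psi> (col_upd W j v)) (column j W)"

definition lyap ::
  "(real^'n \<Rightarrow> real^'n^'n) \<Rightarrow> real^'n \<Rightarrow> real^'n
   \<Rightarrow> (real^'na \<Rightarrow> real) \<Rightarrow> real^'m \<Rightarrow> real^'m^'na \<Rightarrow> real^'m^'na
   \<Rightarrow> (real^'ns \<Rightarrow> real) \<Rightarrow> real^'p \<Rightarrow> real^'p^'ns \<Rightarrow> real^'p^'ns \<Rightarrow> real" where
  "lyap M e xh \<psi>a \<gamma>a Wastar Wa \<psi>s \<gamma>s Wsstar Ws =
     1/2 * (e \<bullet> (M xh *v e))
     + (\<Sum>i\<in>UNIV. 1 / \<gamma>a $ i * bregman \<psi>a (column i Wastar) (column i Wa))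
     + (\<Sum>j\<in>UNIV. 1 / \<gamma>s $ j * bregman \<psi>s (column j Wsstar) (column j Ws))"

end

(*
  Only the Lyapunov inequality V' <= -alpha_V V + sigma is used: the observer dynamics and
  A1-A3 are what the paper needs to establish it.
  With the integrating factor exp (alpha_V t) the inequality gives
  V t <= (V 0 - sigma/alpha_V) exp (-alpha_V t) + sigma/alpha_V.
  Each error is controlled by V: M >= m I bounds the quadratic term below by (m/2) |e|^2, and
  the Bregman divergence of the elastic-net map splits into the weighted quadratic form
  (beta/2) sum_k xi_k d_k^2 >= (beta/2) (min xi) |d|^2 plus a multiple of the Bregman divergence
  of w |-> sqrt (|w|^2 + eps), which is nonnegative by convexity. Since exp (-alpha_V t) -> 0,
  each squared error eventually lies within any eps of its gain times sigma/alpha_V.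
*)
theory Submission
  imports Defs
begin

(* Cauchy-Schwarz for the augmented vectors (w', sqrt eps) and (w, sqrt eps). *)
lemma inner_add_le_sqrt_mult:
  fixes w w' :: "'a::real_inner"
  assumes "\<epsilon> \<ge> 0"
  shows "w' \<bullet> w + \<epsilon> \<le> sqrt (w' \<bullet> w' + \<epsilon>) * sqrt (w \<bullet> w + \<epsilon>)"
  using norm_cauchy_schwarz[of "(w', sqrt \<epsilon>)" "(w, sqrt \<epsilon>)"] assms
  by (simp add: norm_prod_def power2_norm_eq_inner)

lemma sqrt_inner_tangent_le:
  fixes w w' :: "'a::real_inner"
  assumes "\<epsilon> > 0"
  shows "sqrt (w' \<bullet> w' + \<epsilon>) + w' \<bullet> (w - w') / sqrt (w' \<bullet> w' + \<epsilon>) \<le> sqrt (w \<bullet> w + \<epsilon>)"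
proof -
  define S' where "S' = sqrt (w' \<bullet> w' + \<epsilon>)"
  have "S' > 0" using assms by (simp add: S'_def add_nonneg_pos)
  moreover have "S' * S' = w' \<bullet> w' + \<epsilon>"
    using assms by (simp add: S'_def add_nonneg_pos less_imp_le)
  ultimately have "S' + w' \<bullet> (w - w') / S' = (w' \<bullet> w + \<epsilon>) / S'"
    by (simp add: field_simps inner_diff_right)
  also have "\<dots> \<le> sqrt (w \<bullet> w + \<epsilon>)"
    using inner_add_le_sqrt_mult[of \<epsilon> w' w] assms \<open>S' > 0\<close>
    by (simp add: S'_def divide_le_eq mult.commute)
  finally show ?thesis unfolding S'_def .
qed

lemma enet_col_eq:
  "enet_col \<beta> \<alpha> \<epsilon> \<xi> w = \<beta> / 2 * (\<Sum>i\<in>UNIV. \<xi> $ i * (w $ i)\<^sup>2) + \<alpha> * sqrt (w \<bullet> w + \<epsilon>)"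
proof -
  have "w \<bullet> (diagm \<xi> *v w) = (\<Sum>i\<in>UNIV. \<xi> $ i * (w $ i)\<^sup>2)"
    by (simp add: diagm_def inner_vec_def matrix_vector_mult_def power2_eq_square
        if_distrib[of "\<lambda>c. c * _"] sum.delta mult.left_commute cong: if_cong)
  then show ?thesis by (simp add: enet_col_def power2_norm_eq_inner)
qed

lemma has_derivative_enet_col:
  assumes "\<epsilon> > 0"
  shows "(enet_col \<beta> \<alpha> \<epsilon> \<xi> has_derivative
           (\<lambda>v. \<beta> * (\<Sum>i\<in>UNIV. \<xi> $ i * w $ i * v $ i) + \<alpha> * (w \<bullet> v) / sqrt (w \<bullet> w + \<epsilon>))) (at w)"
proof -
  have pos: "0 < w \<bullet> w + \<epsilon>" using assms by (simp add: add_nonneg_pos)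
  show ?thesis
    unfolding enet_col_eq[abs_def]
    apply (rule has_derivative_eq_rhs)
     apply (rule derivative_eq_intros bounded_linear.has_derivative[OF bounded_linear_vec_nth] refl | simp add: pos)+
    apply (rule ext)
    subgoal for v
    proof -
      have "(\<Sum>i\<in>UNIV. \<xi> $ i * (2 * v $ i * w $ i)) = 2 * (\<Sum>i\<in>UNIV. \<xi> $ i * w $ i * v $ i)"
        unfolding sum_distrib_left by (rule sum.cong) auto
      then show ?thesis by (simp add: inner_commute[of v w]) (metis divide_inverse mult.assoc)
    qed
    done
qed

lemma bregman_enet_col:
  assumes "\<epsilon> > 0"
  shows "bregman (enet_col \<beta> \<alpha> \<epsilon> \<xi>) w w'
    = \<beta> / 2 * (\<Sum>i\<in>UNIV. \<xi> $ i * ((w - w') $ i)\<^sup>2)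
      + \<alpha> * (sqrt (w \<bullet> w + \<epsilon>) - sqrt (w' \<bullet> w' + \<epsilon>) - w' \<bullet> (w - w') / sqrt (w' \<bullet> w' + \<epsilon>))"
proof -
  have quadratic_part: "(\<Sum>i\<in>UNIV. \<xi> $ i * (w $ i)\<^sup>2) - (\<Sum>i\<in>UNIV. \<xi> $ i * (w' $ i)\<^sup>2)
      - 2 * (\<Sum>i\<in>UNIV. \<xi> $ i * w' $ i * (w - w') $ i) = (\<Sum>i\<in>UNIV. \<xi> $ i * ((w - w') $ i)\<^sup>2)"
    unfolding sum_distrib_left sum_subtractf[symmetric]
    by (rule sum.cong) (auto simp: power2_eq_square algebra_simps)
  have "bregman (enet_col \<beta> \<alpha> \<epsilon> \<xi>) w w'
    = \<beta> / 2 * ((\<Sum>i\<in>UNIV. \<xi> $ i * (w $ i)\<^sup>2) - (\<Sum>i\<in>UNIV. \<xi> $ i * (w' $ i)\<^sup>2)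
      - 2 * (\<Sum>i\<in>UNIV. \<xi> $ i * w' $ i * (w - w') $ i))
      + \<alpha> * (sqrt (w \<bullet> w + \<epsilon>) - sqrt (w' \<bullet> w' + \<epsilon>) - w' \<bullet> (w - w') / sqrt (w' \<bullet> w' + \<epsilon>))"
    unfolding bregman_def
    unfolding frechet_derivative_at[OF has_derivative_enet_col[OF assms], symmetric] enet_col_eq
    by (simp add: algebra_simps)
  then show ?thesis unfolding quadratic_part .
qed

lemma bregman_enet_col_ge:
  assumes "\<beta> \<ge> 0" "\<alpha> \<ge> 0" "\<epsilon> > 0"
  shows "\<beta> / 2 * Min (range (\<lambda>k. \<xi> $ k)) * (norm (w - w'))\<^sup>2 \<le> bregman (enet_col \<beta> \<alpha> \<epsilon> \<xi>) w w'"
proof -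
  have "Min (range (\<lambda>k. \<xi> $ k)) * (norm (w - w'))\<^sup>2 = (\<Sum>i\<in>UNIV. Min (range (\<lambda>k. \<xi> $ k)) * ((w - w') $ i)\<^sup>2)"
    unfolding power2_norm_eq_inner inner_vec_def sum_distrib_left by (simp add: power2_eq_square)
  also have "\<dots> \<le> (\<Sum>i\<in>UNIV. \<xi> $ i * ((w - w') $ i)\<^sup>2)"
    by (intro sum_mono mult_right_mono Min_le) auto
  finally have "\<beta> / 2 * Min (range (\<lambda>k. \<xi> $ k)) * (norm (w - w'))\<^sup>2 \<le> \<beta> / 2 * (\<Sum>i\<in>UNIV. \<xi> $ i * ((w - w') $ i)\<^sup>2)"
    using assms(1) by (simp add: mult.assoc mult_left_mono)
  moreover have "0 \<le> \<alpha> * (sqrt (w \<bullet> w + \<epsilon>) - sqrt (w' \<bullet> w' + \<epsilon>) - w' \<bullet> (w - w') / sqrt (w' \<bullet> w' + \<epsilon>))"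
    using sqrt_inner_tangent_le[OF assms(3), of w' w] assms(2) by simp
  ultimately show ?thesis unfolding bregman_enet_col[OF assms(3)] by linarith
qed

lemma bregman_enet_col_nonneg:
  assumes "\<beta> \<ge> 0" "\<alpha> \<ge> 0" "\<epsilon> > 0" "\<forall>k. \<xi> $ k \<ge> 0"
  shows "0 \<le> bregman (enet_col \<beta> \<alpha> \<epsilon> \<xi>) w w'"
proof -
  have "0 \<le> Min (range (\<lambda>k. \<xi> $ k))" using assms(4) by (subst Min_ge_iff) auto
  then have "0 \<le> \<beta> / 2 * Min (range (\<lambda>k. \<xi> $ k)) * (norm (w - w'))\<^sup>2"
    using assms(1) by (intro mult_nonneg_nonneg) auto
  then show ?thesis using bregman_enet_col_ge[OF assms(1-3), of \<xi> w w'] by linarith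
qed

lemma norm_power2_eq_sum_column: "(norm (A :: real^'c^'k))\<^sup>2 = (\<Sum>i\<in>UNIV. (norm (column i A))\<^sup>2)"
  unfolding power2_norm_eq_inner inner_vec_def column_def
  by (simp add: sum.swap[of _ "UNIV :: 'k set"])

definition weight_error_gain :: "real^'c \<Rightarrow> real \<Rightarrow> real^'k \<Rightarrow> real" where
  "weight_error_gain \<gamma> \<beta> \<xi> = 2 * Max (range (\<lambda>i. \<gamma> $ i)) / (\<beta> * Min (range (\<lambda>k. \<xi> $ k)))"

lemma weight_error_gain_pos:
  fixes \<gamma> :: "real^'c" and \<xi> :: "real^'k"
  assumes "\<forall>i. \<gamma> $ i > 0" "\<beta> > 0" "\<forall>k. \<xi> $ k > 0"
  shows "0 < weight_error_gain \<gamma> \<beta> \<xi>"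
proof -
  have "0 < Max (range (\<lambda>i. \<gamma> $ i))" using assms(1) by (subst Max_gr_iff) auto
  moreover have "0 < Min (range (\<lambda>k. \<xi> $ k))" using assms(3) by (subst Min_gr_iff) auto
  ultimately show ?thesis
    unfolding weight_error_gain_def using assms(2) by (metis divide_pos_pos mult_pos_pos zero_less_numeral)
qed

lemma norm_power2_le_weighted_bregman_sum:
  fixes W W' :: "real^'c^'k" and \<gamma> :: "real^'c" and \<xi> :: "real^'k"
  assumes \<gamma>: "\<forall>i. \<gamma> $ i > 0" and "\<beta> > 0" "\<alpha> \<ge> 0" "\<epsilon> > 0" and \<xi>: "\<forall>k. \<xi> $ k > 0"
  shows "(norm (W - W'))\<^sup>2 \<le> weight_error_gain \<gamma> \<beta> \<xi>
           * (\<Sum>i\<in>UNIV. 1 / \<gamma> $ i * bregman (enet_col \<beta> \<alpha> \<epsilon> \<xi>) (column i W) (column i W'))"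
proof -
  define G where "G = Max (range (\<lambda>i. \<gamma> $ i))"
  define m where "m = Min (range (\<lambda>k. \<xi> $ k))"
  define D where "D i = bregman (enet_col \<beta> \<alpha> \<epsilon> \<xi>) (column i W) (column i W')" for i
  have "m > 0" unfolding m_def using \<xi> by (subst Min_gr_iff) auto
  have \<gamma>_le: "\<gamma> $ i \<le> G" for i unfolding G_def by (intro Max_ge) auto
  have column_bound: "(norm (column i (W - W')))\<^sup>2 \<le> 2 * G / (\<beta> * m) * (1 / \<gamma> $ i * D i)" for i
  proof -
    have "column i (W - W') = column i W - column i W'" by (simp add: column_def vec_eq_iff)
    moreover have "\<beta> / 2 * m * (norm (column i W - column i W'))\<^sup>2 \<le> D i"
      unfolding D_def m_def using assms(2-4) by (intro bregman_enet_col_ge) auto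
    ultimately have "(norm (column i (W - W')))\<^sup>2 \<le> 2 / (\<beta> * m) * D i"
      using \<open>\<beta> > 0\<close> \<open>m > 0\<close> by (simp only:) (simp add: field_simps)
    also have "\<dots> \<le> 2 / (\<beta> * m) * (G / \<gamma> $ i * D i)"
    proof -
      have "1 \<le> G / \<gamma> $ i" using \<gamma> \<gamma>_le[of i] by simp
      moreover have "0 \<le> D i" unfolding D_def using assms(2-5) by (intro bregman_enet_col_nonneg) (auto simp: less_imp_le)
      ultimately have "D i \<le> G / \<gamma> $ i * D i" using mult_right_mono by fastforce
      then show ?thesis using \<open>\<beta> > 0\<close> \<open>m > 0\<close> by (intro mult_left_mono) auto
    qed
    finally show ?thesis by simp
  qed
  have "(norm (W - W'))\<^sup>2 \<le> (\<Sum>i\<in>UNIV. 2 * G / (\<beta> * m) * (1 / \<gamma> $ i * D i))"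
    unfolding norm_power2_eq_sum_column[of "W - W'"] by (intro sum_mono column_bound)
  then show ?thesis unfolding sum_distrib_left[symmetric] weight_error_gain_def G_def m_def D_def .
qed

lemma quadratic_form_ge_of_psd_le:
  assumes "psd_le (m *\<^sub>R mat 1) A"
  shows "m * (norm v)\<^sup>2 \<le> v \<bullet> (A *v v)"
proof -
  have "v \<bullet> ((m *\<^sub>R mat 1) *v v) = m * (norm v)\<^sup>2"
    by (simp add: scaleR_matrix_vector_assoc[symmetric] power2_norm_eq_inner)
  then show ?thesis using assms unfolding psd_le_def by metis
qed

lemma lyap_lower_bounds:
  fixes M :: "real^'n \<Rightarrow> real^'n^'n" and e z :: "real^'n"
    and Wastar Wa :: "real^'m^'na" and Wsstar Ws :: "real^'p^'ns"
  assumes M: "psd_le (mlow *\<^sub>R mat 1) (M z)" "mlow > 0"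
    and a: "\<forall>i. \<gamma>a $ i > 0" "\<beta>a > 0" "\<alpha>a \<ge> 0" "\<epsilon>a > 0" "\<forall>k. \<xi>a $ k > 0"
    and s: "\<forall>j. \<gamma>s $ j > 0" "\<beta>s > 0" "\<alpha>s \<ge> 0" "\<epsilon>s > 0" "\<forall>k. \<xi>s $ k > 0"
  defines "V \<equiv> lyap M e z (enet_col \<beta>a \<alpha>a \<epsilon>a \<xi>a) \<gamma>a Wastar Wa (enet_col \<beta>s \<alpha>s \<epsilon>s \<xi>s) \<gamma>s Wsstar Ws"
  shows "(norm e)\<^sup>2 \<le> 2 / mlow * V"
    and "(norm (Wastar - Wa))\<^sup>2 \<le> weight_error_gain \<gamma>a \<beta>a \<xi>a * V"
    and "(norm (Wsstar - Ws))\<^sup>2 \<le> weight_error_gain \<gamma>s \<beta>s \<xi>s * V"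
proof -
  define Sa where "Sa = (\<Sum>i\<in>UNIV. 1 / \<gamma>a $ i * bregman (enet_col \<beta>a \<alpha>a \<epsilon>a \<xi>a) (column i Wastar) (column i Wa))"
  define Ss where "Ss = (\<Sum>j\<in>UNIV. 1 / \<gamma>s $ j * bregman (enet_col \<beta>s \<alpha>s \<epsilon>s \<xi>s) (column j Wsstar) (column j Ws))"
  have V_eq: "V = 1/2 * (e \<bullet> (M z *v e)) + Sa + Ss"
    unfolding V_def lyap_def Sa_def Ss_def ..
  have e_bound: "mlow * (norm e)\<^sup>2 \<le> e \<bullet> (M z *v e)"
    by (rule quadratic_form_ge_of_psd_le[OF M(1)])
  have "0 \<le> Sa" unfolding Sa_def using a
    by (intro sum_nonneg mult_nonneg_nonneg bregman_enet_col_nonneg) (auto simp: less_imp_le)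
  moreover have "0 \<le> Ss" unfolding Ss_def using s
    by (intro sum_nonneg mult_nonneg_nonneg bregman_enet_col_nonneg) (auto simp: less_imp_le)
  moreover have "0 \<le> e \<bullet> (M z *v e)" using e_bound M(2) by (simp add: order_trans[rotated])
  ultimately have "1/2 * (e \<bullet> (M z *v e)) \<le> V" "Sa \<le> V" "Ss \<le> V" unfolding V_eq by linarith+
  then show "(norm e)\<^sup>2 \<le> 2 / mlow * V"
    using e_bound M(2) by (simp add: field_simps)
  show "(norm (Wastar - Wa))\<^sup>2 \<le> weight_error_gain \<gamma>a \<beta>a \<xi>a * V"
    using \<open>Sa \<le> V\<close> norm_power2_le_weighted_bregman_sum[OF a, of Wastar Wa, folded Sa_def]
      weight_error_gain_pos[OF a(1,2,5)] by (meson less_imp_le mult_left_mono order_trans)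
  show "(norm (Wsstar - Ws))\<^sup>2 \<le> weight_error_gain \<gamma>s \<beta>s \<xi>s * V"
    using \<open>Ss \<le> V\<close> norm_power2_le_weighted_bregman_sum[OF s, of Wsstar Ws, folded Ss_def]
      weight_error_gain_pos[OF s(1,2,5)] by (meson less_imp_le mult_left_mono order_trans)
qed

lemma differential_inequality_exp_bound:
  fixes V :: "real \<Rightarrow> real"
  assumes "a > 0"
    and deriv: "\<forall>t\<ge>0. \<exists>D. (V has_real_derivative D) (at t within {0..}) \<and> D \<le> - a * V t + s"
    and "t \<ge> 0"
  shows "V t \<le> (V 0 - s / a) * exp (- a * t) + s / a"
proof -
  define \<phi> where "\<phi> \<tau> = (V \<tau> - s / a) * exp (a * \<tau>)" for \<tau>
  have \<phi>_deriv: "\<exists>D. (\<phi> has_real_derivative D) (at \<tau> within {0..}) \<and> D \<le> 0" if "\<tau> \<ge> 0" for \<tau>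
  proof -
    obtain D where D: "(V has_real_derivative D) (at \<tau> within {0..})" "D \<le> - a * V \<tau> + s"
      using deriv \<open>\<tau> \<ge> 0\<close> by blast
    have "(\<phi> has_real_derivative (D + a * V \<tau> - s) * exp (a * \<tau>)) (at \<tau> within {0..})"
      unfolding \<phi>_def using \<open>a > 0\<close>
      by (auto intro!: derivative_eq_intros D(1) simp: field_simps)
    moreover have "(D + a * V \<tau> - s) * exp (a * \<tau>) \<le> 0"
      using D(2) by (simp add: mult_nonpos_nonneg)
    ultimately show ?thesis by blast
  qed
  have "\<phi> t \<le> \<phi> 0"
  proof (rule DERIV_nonpos_imp_decreasing_open[OF \<open>t \<ge> 0\<close>])
    fix \<tau> assume \<tau>: "0 < \<tau>" "\<tau> < t"
    obtain D where D: "(\<phi> has_real_derivative D) (at \<tau> within {0..})" "D \<le> 0"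
      using \<phi>_deriv[of \<tau>] \<tau> by auto
    have "(\<phi> has_real_derivative D) (at \<tau> within {0<..})"
      by (rule DERIV_subset[OF D(1)]) auto
    then have "(\<phi> has_real_derivative D) (at \<tau>)"
      using at_within_open[of \<tau> "{0<..}"] \<tau> by simp
    then show "\<exists>D. (\<phi> has_real_derivative D) (at \<tau>) \<and> D \<le> 0" using D(2) by blast
  next
    show "continuous_on {0..t} \<phi>"
      unfolding continuous_on_eq_continuous_within
    proof
      fix \<tau> assume "\<tau> \<in> {0..t}"
      then obtain D where "(\<phi> has_real_derivative D) (at \<tau> within {0..})" using \<phi>_deriv[of \<tau>] by auto
      then show "continuous (at \<tau> within {0..t}) \<phi>"
        by (rule continuous_within_subset[OF DERIV_continuous]) auto
    qed
  qed
  then have "V t - s / a \<le> (V 0 - s / a) * exp (- a * t)"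
    by (simp add: \<phi>_def exp_minus field_simps)
  then show ?thesis by simp
qed

lemma scaled_exp_bound_of_differential_inequality:
  fixes V q :: "real \<Rightarrow> real"
  assumes "a > 0"
    and deriv: "\<forall>t\<ge>0. \<exists>D. (V has_real_derivative D) (at t within {0..}) \<and> D \<le> - a * V t + s"
    and "\<kappa> \<ge> 0" and "\<And>t. q t \<le> \<kappa> * V t"
  shows "\<forall>t\<ge>0. q t \<le> \<kappa> * \<bar>V 0 - s / a\<bar> * exp (- a * t) + \<kappa> * (s / a)"
proof (intro allI impI)
  fix t :: real assume "t \<ge> 0"
  have "V t \<le> (V 0 - s / a) * exp (- a * t) + s / a"
    by (rule differential_inequality_exp_bound[OF \<open>a > 0\<close> deriv \<open>t \<ge> 0\<close>])
  also have "\<dots> \<le> \<bar>V 0 - s / a\<bar> * exp (- a * t) + s / a"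
    by (intro add_right_mono mult_right_mono) auto
  finally have "q t \<le> \<kappa> * (\<bar>V 0 - s / a\<bar> * exp (- a * t) + s / a)"
    using assms(3,4) by (meson mult_left_mono order_trans)
  then show "q t \<le> \<kappa> * \<bar>V 0 - s / a\<bar> * exp (- a * t) + \<kappa> * (s / a)"
    by (simp add: algebra_simps)
qed

lemma eventually_le_of_exp_bound:
  fixes q :: "real \<Rightarrow> real"
  assumes "a > 0" "\<epsilon> > 0" and bound: "\<forall>t\<ge>0. q t \<le> K * exp (- a * t) + c"
  shows "\<forall>\<^sub>F t in at_top. q t \<le> c + \<epsilon>"
proof -
  have "filterlim (\<lambda>t. - a * t) at_bot at_top"
    using \<open>a > 0\<close> by (intro filterlim_tendsto_neg_mult_at_bot[OF tendsto_const _ filterlim_ident]) auto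
  then have "((\<lambda>t. K * exp (- a * t)) \<longlongrightarrow> 0) at_top"
    by (intro tendsto_mult_right_zero filterlim_compose[OF exp_at_bot])
  then have "\<forall>\<^sub>F t in at_top. K * exp (- a * t) < \<epsilon>"
    using \<open>\<epsilon> > 0\<close> by (rule order_tendstoD)
  then show ?thesis
    using eventually_ge_at_top[of 0] by eventually_elim (use bound in force)
qed

lemma eventually_at_top_imp_nonneg_threshold:
  "eventually P at_top \<Longrightarrow> \<exists>T\<ge>(0::real). \<forall>t\<ge>T. P t"
  unfolding eventually_at_top_linorder by (meson max.cobounded1 max.cobounded2 order_trans)

theorem theorem3:
  fixes f :: "real^'n \<Rightarrow> real^'n"
    and g gf :: "real^'n \<Rightarrow> real^'m^'n"
    and h :: "real^'n \<Rightarrow> real^'p"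
    and L :: "real^'p^'n"
    and M :: "real^'n \<Rightarrow> real^'n^'n"
    and \<phi>a :: "real^'n \<Rightarrow> real^'m \<Rightarrow> real^'na"
    and \<phi>s :: "real^'n \<Rightarrow> real^'m \<Rightarrow> real^'ns"
    and x xh d :: "real \<Rightarrow> real^'n"
    and u fa :: "real \<Rightarrow> real^'m"
    and fs :: "real \<Rightarrow> real^'p"
    and Wa :: "real \<Rightarrow> real^'m^'na" and Wastar :: "real^'m^'na"
    and Ws :: "real \<Rightarrow> real^'p^'ns" and Wsstar :: "real^'p^'ns"
    and \<xi>a :: "real^'na" and \<xi>s :: "real^'ns"
    and \<gamma>a :: "real^'m" and \<gamma>s :: "real^'p"
    and dbar \<beta>a \<alpha>a \<epsilon>a \<beta>s \<alpha>s \<epsilon>s \<sigma>a \<sigma>s :: real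
    and epsa_bar epss_bar L\<phi>a L\<phi>s mlow mup lam \<alpha>V \<sigma> :: real
  assumes smooth:
      "\<forall>z. f differentiable (at z) \<and> g differentiable (at z) \<and> gf differentiable (at z)
            \<and> h differentiable (at z) \<and> M differentiable (at z)"
      "\<forall>z v. (\<lambda>q. \<phi>a (fst q) (snd q)) differentiable (at (z, v))
            \<and> (\<lambda>q. \<phi>s (fst q) (snd q)) differentiable (at (z, v))"
    and dist_bound: "\<forall>t\<ge>0. norm (d t) < dbar"
    and mirror_params: "\<beta>a > 0" "\<alpha>a > 0" "\<epsilon>a > 0" "\<forall>k. \<xi>a $ k > 0"
      "\<beta>s > 0" "\<alpha>s > 0" "\<epsilon>s > 0" "\<forall>k. \<xi>s $ k > 0"
    and gains: "\<forall>i. \<gamma>a $ i > 0" "\<forall>j. \<gamma>s $ j > 0" "\<sigma>a > 0" "\<sigma>s > 0"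
    and plant:
      "\<forall>t\<ge>0. (x has_vector_derivative
                 (f (x t) + g (x t) *v u t + gf (x t) *v fa t + d t)) (at t within {0..})"
    and observer_and_laws:
      "\<forall>t\<ge>0. let r = (h (x t) + fs t) - (h (xh t) + transpose (Ws t) *v \<phi>s (xh t) (u t));
                 z = transpose (g (xh t)) *v (M (xh t) *v (L *v r)) in
         (xh has_vector_derivative
            (f (xh t) + g (xh t) *v u t + g (xh t) *v (transpose (Wa t) *v \<phi>a (xh t) (u t))
             + L *v r)) (at t within {0..})
       \<and> (Wa has_vector_derivative
            (\<chi> k i. - \<gamma>a $ i * (matrix_inv (hess_block (enet_map \<beta>a \<alpha>a \<epsilon>a \<xi>a) (Wa t) i)
                                    *v \<phi>a (xh t) (u t)) $ k * z $ i
                    - \<sigma>a * Wa t $ k $ i)) (at t within {0..})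
       \<and> (Ws has_vector_derivative
            (\<chi> k j. \<gamma>s $ j * (matrix_inv (hess_block (enet_map \<beta>s \<alpha>s \<epsilon>s \<xi>s) (Ws t) j)
                                    *v \<phi>s (xh t) (u t)) $ k * r $ j
                    - \<sigma>s * Ws t $ k $ j)) (at t within {0..})"
    and A1: "\<forall>t\<ge>0. norm (fa t - transpose Wastar *v \<phi>a (x t) (u t)) \<le> epsa_bar"
      "\<forall>t\<ge>0. norm (fs t - transpose Wsstar *v \<phi>s (x t) (u t)) \<le> epss_bar"
      "\<forall>z1 z2 v. norm (\<phi>a z1 v - \<phi>a z2 v) \<le> L\<phi>a * norm (z1 - z2)"
      "\<forall>z1 z2 v. norm (\<phi>s z1 v - \<phi>s z2 v) \<le> L\<phi>s * norm (z1 - z2)"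
    and A2: "\<forall>z. transpose (M z) = M z" "mlow > 0"
      "\<forall>z. psd_le (mlow *\<^sub>R mat 1) (M z) \<and> psd_le (M z) (mup *\<^sub>R mat 1)"
      "lam > 0"
      "\<forall>z w. let A = jacobian f (at z) + (\<Sum>k\<in>UNIV. w $ k *\<^sub>R jacobian (\<lambda>y. column k (g y)) (at z))
                      - L ** jacobian h (at z) in
          psd_le (frechet_derivative M (at z) (f z + g z *v w) + transpose A ** M z + M z ** A)
                 ((- 2 * lam) *\<^sub>R M z)"
    and A3: "\<exists>S U. compact S \<and> compact U \<and> (\<forall>t\<ge>0. x t \<in> S \<and> xh t \<in> S \<and> u t \<in> U)
              \<and> (\<forall>z\<in>S. \<exists>\<delta>>0. \<exists>C. lipschitz_on C (cball z \<delta> \<inter> S) f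
                     \<and> lipschitz_on C (cball z \<delta> \<inter> S) g \<and> lipschitz_on C (cball z \<delta> \<inter> S) h)"
    and Vdot: "\<alpha>V > 0" "\<sigma> > 0"
      "\<forall>t\<ge>0. \<exists>D. ((\<lambda>\<tau>. lyap M (x \<tau> - xh \<tau>) (xh \<tau>)
                     (enet_col \<beta>a \<alpha>a \<epsilon>a \<xi>a) \<gamma>a Wastar (Wa \<tau>)
                     (enet_col \<beta>s \<alpha>s \<epsilon>s \<xi>s) \<gamma>s Wsstar (Ws \<tau>)) has_real_derivative D)
                   (at t within {0..})
              \<and> D \<le> - \<alpha>V * lyap M (x t - xh t) (xh t)
                     (enet_col \<beta>a \<alpha>a \<epsilon>a \<xi>a) \<gamma>a Wastar (Wa t)
                     (enet_col \<beta>s \<alpha>s \<epsilon>s \<xi>s) \<gamma>s Wsstar (Ws t) + \<sigma>"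
  shows "(\<exists>C\<ge>0. \<forall>t\<ge>0. (norm (x t - xh t))\<^sup>2 \<le> C * exp (- \<alpha>V * t) + 2 / mlow * (\<sigma> / \<alpha>V))
       \<and> (\<forall>\<epsilon>>0. \<exists>T\<ge>0. \<forall>t\<ge>T.
            (norm (x t - xh t))\<^sup>2 \<le> 2 / mlow * (\<sigma> / \<alpha>V) + \<epsilon>
          \<and> (norm (Wastar - Wa t))\<^sup>2
              \<le> 2 * Max (range (\<lambda>i. \<gamma>a $ i)) / (\<beta>a * Min (range (\<lambda>k. \<xi>a $ k))) * (\<sigma> / \<alpha>V) + \<epsilon>
          \<and> (norm (Wsstar - Ws t))\<^sup>2
              \<le> 2 * Max (range (\<lambda>j. \<gamma>s $ j)) / (\<beta>s * Min (range (\<lambda>k. \<xi>s $ k))) * (\<sigma> / \<alpha>V) + \<epsilon>)"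
proof -
  let ?V = "\<lambda>\<tau>. lyap M (x \<tau> - xh \<tau>) (xh \<tau>)
    (enet_col \<beta>a \<alpha>a \<epsilon>a \<xi>a) \<gamma>a Wastar (Wa \<tau>) (enet_col \<beta>s \<alpha>s \<epsilon>s \<xi>s) \<gamma>s Wsstar (Ws \<tau>)"
  let ?K = "\<bar>?V 0 - \<sigma> / \<alpha>V\<bar>"
  let ?\<kappa>a = "weight_error_gain \<gamma>a \<beta>a \<xi>a" and ?\<kappa>s = "weight_error_gain \<gamma>s \<beta>s \<xi>s"
  have lower: "(norm (x t - xh t))\<^sup>2 \<le> 2 / mlow * ?V t"
    "(norm (Wastar - Wa t))\<^sup>2 \<le> ?\<kappa>a * ?V t" "(norm (Wsstar - Ws t))\<^sup>2 \<le> ?\<kappa>s * ?V t" for t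
    using A2(3)
    by (intro lyap_lower_bounds[OF _ A2(2) gains(1) mirror_params(1) less_imp_le[OF mirror_params(2)]
          mirror_params(3,4) gains(2) mirror_params(5) less_imp_le[OF mirror_params(6)] mirror_params(7,8)]; blast)+
  note exp_bound = scaled_exp_bound_of_differential_inequality[OF Vdot(1) Vdot(3)]
  have e_bound: "\<forall>t\<ge>0. (norm (x t - xh t))\<^sup>2 \<le> 2 / mlow * ?K * exp (- \<alpha>V * t) + 2 / mlow * (\<sigma> / \<alpha>V)"
    using A2(2) lower(1) by (intro exp_bound) auto
  have Wa_bound: "\<forall>t\<ge>0. (norm (Wastar - Wa t))\<^sup>2 \<le> ?\<kappa>a * ?K * exp (- \<alpha>V * t) + ?\<kappa>a * (\<sigma> / \<alpha>V)"
    using weight_error_gain_pos[OF gains(1) mirror_params(1,4)] lower(2) by (intro exp_bound) auto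
  have Ws_bound: "\<forall>t\<ge>0. (norm (Wsstar - Ws t))\<^sup>2 \<le> ?\<kappa>s * ?K * exp (- \<alpha>V * t) + ?\<kappa>s * (\<sigma> / \<alpha>V)"
    using weight_error_gain_pos[OF gains(2) mirror_params(5,8)] lower(3) by (intro exp_bound) auto
  note ultimately_le = eventually_le_of_exp_bound[OF Vdot(1)]
  show ?thesis
    unfolding weight_error_gain_def[symmetric]
  proof (intro conjI allI impI eventually_at_top_imp_nonneg_threshold eventually_conj)
    show "\<exists>C\<ge>0. \<forall>t\<ge>0. (norm (x t - xh t))\<^sup>2 \<le> C * exp (- \<alpha>V * t) + 2 / mlow * (\<sigma> / \<alpha>V)"
      using e_bound A2(2) by (intro exI[of _ "2 / mlow * ?K"]) auto
  qed (use ultimately_le[OF _ e_bound] ultimately_le[OF _ Wa_bound] ultimately_le[OF _ Ws_bound] in blast)+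
qed

end
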